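(* Let $d \geq 2$, $N, K \geq 1$ be integers, $\mathbf{y}_1,\ldots,\mathbf{y}_N \in \mathbb{R}^d$ with matrix $\mathbf{Y} = [\mathbf{y}_1,\ldots,\mathbf{y}_N] \in \mathbb{R}^{d\times N}$, and $\rho_k^{[i]} \geq 0$ with $\sum_{k=1}^K \rho_k^{[i]} = 1$ for each $i$. Put $\mathbf{A}_k = \sum_{i} \rho_k^{[i]}\mathbf{y}_i\mathbf{y}_i^\mathrm{T}$, $\gamma_k = \sum_i \rho_k^{[i]}$, and $\lambda_k = $ largest eigenvalue of $\mathbf{A}_k$. For $S \subseteq [K] = \{1,\ldots,K\}$ define \[ \sigma^2(S) = \frac{\|\mathbf{Y}\|_\mathrm{F}^2 - \sum_{k\in S}\lambda_k}{dN - \sum_{k\in S}\gamma_k},\qquad g(S) = \Big[dN - \sum_{k\in S}\gamma_k\Big]\ln \sigma^2(S) + \sum_{k\in S}\gamma_k \ln\frac{\lambda_k}{\gamma_k}, \] and assume that $\gamma_k > 0$, $\lambda_k > 0$ for all $k$ and $\sigma^2(S) > 0$ for all $S \subseteq [K]$. If $S \subseteq [K]$ and $j \in S$ satisfy $\sigma^2(S) \leq \lambda_j/\gamma_j$, then $g(S) \leq g(S \setminus \{j\})$.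
   Context: $\|\cdot\|_\mathrm{F}$ is the Frobenius norm; $\ln$ is the natural logarithm. *)

theory Defs
  imports "HOL-Analysis.Analysis"
begin

text \<open>Vectors in R^d are elements of real^'d (d = CARD('d)); the data points are
  y 0, ..., y (N-1); the weights are rho k i for k < K, i < N.\<close>

definition outer_self :: "real^'d \<Rightarrow> real^'d^'d" where
  "outer_self v = (\<chi> a b. v $ a * v $ b)"

definition Amat :: "(nat \<Rightarrow> real^'d) \<Rightarrow> (nat \<Rightarrow> nat \<Rightarrow> real) \<Rightarrow> nat \<Rightarrow> nat \<Rightarrow> real^'d^'d" where
  "Amat y rho N k = (\<Sum>i<N. rho k i *\<^sub>R outer_self (y i))"

definition gam :: "(nat \<Rightarrow> nat \<Rightarrow> real) \<Rightarrow> nat \<Rightarrow> nat \<Rightarrow> real" where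
  "gam rho N k = (\<Sum>i<N. rho k i)"

definition is_eigenvalue :: "real^'d^'d \<Rightarrow> real \<Rightarrow> bool" where
  "is_eigenvalue A l \<longleftrightarrow> (\<exists>v. v \<noteq> 0 \<and> A *v v = l *\<^sub>R v)"

definition largest_eigenvalue :: "real^'d^'d \<Rightarrow> real" where
  "largest_eigenvalue A = Max {l. is_eigenvalue A l}"

definition lam :: "(nat \<Rightarrow> real^'d) \<Rightarrow> (nat \<Rightarrow> nat \<Rightarrow> real) \<Rightarrow> nat \<Rightarrow> nat \<Rightarrow> real" where
  "lam y rho N k = largest_eigenvalue (Amat y rho N k)"

definition frob_sq :: "(nat \<Rightarrow> real^'d) \<Rightarrow> nat \<Rightarrow> real" where
  "frob_sq y N = (\<Sum>i<N. \<Sum>a\<in>UNIV. (y i $ a)\<^sup>2)"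

definition sigma2 :: "(nat \<Rightarrow> real^'d) \<Rightarrow> (nat \<Rightarrow> nat \<Rightarrow> real) \<Rightarrow> nat \<Rightarrow> nat set \<Rightarrow> real" where
  "sigma2 y rho N S =
     (frob_sq y N - (\<Sum>k\<in>S. lam y rho N k)) /
     (real CARD('d) * real N - (\<Sum>k\<in>S. gam rho N k))"

definition gfun :: "(nat \<Rightarrow> real^'d) \<Rightarrow> (nat \<Rightarrow> nat \<Rightarrow> real) \<Rightarrow> nat \<Rightarrow> nat set \<Rightarrow> real" where
  "gfun y rho N S =
     (real CARD('d) * real N - (\<Sum>k\<in>S. gam rho N k)) * ln (sigma2 y rho N S)
     + (\<Sum>k\<in>S. gam rho N k * ln (lam y rho N k / gam rho N k))"

end

theory Submission
  imports Defs
begin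

text \<open>With \<open>\<phi>(p, u) = p ln (u / p)\<close>, \<open>D\<^sub>S = dN - \<Sum>\<^sub>S \<gamma>\<^sub>k\<close> and
  \<open>E\<^sub>S = \<parallel>Y\<parallel>\<^sup>2 - \<Sum>\<^sub>S \<lambda>\<^sub>k\<close>, we have \<open>g(S) = \<phi>(D\<^sub>S, E\<^sub>S) + \<Sum>\<^sub>S \<phi>(\<gamma>\<^sub>k, \<lambda>\<^sub>k)\<close>.
  Removing \<open>j\<close> from \<open>S\<close> merges \<open>\<phi>(D\<^sub>S, E\<^sub>S) + \<phi>(\<gamma>\<^sub>j, \<lambda>\<^sub>j)\<close> into
  \<open>\<phi>(D\<^sub>S + \<gamma>\<^sub>j, E\<^sub>S + \<lambda>\<^sub>j)\<close>, and \<open>\<phi>\<close> is superadditive on positive arguments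
  (the log-sum inequality, i.e. concavity of \<open>ln\<close>).\<close>

lemma log_sum_inequality:
  fixes p q u v :: real
  assumes "p > 0" "q > 0" "u > 0" "v > 0"
  shows "p * ln (u / p) + q * ln (v / q) \<le> (p + q) * ln ((u + v) / (p + q))"
proof -
  define m where "m = (u + v) / (p + q)"
  have "m > 0" using assms by (simp add: m_def)
  have "p * ln ((u / p) / m) + q * ln ((v / q) / m) \<le> p * ((u / p) / m - 1) + q * ((v / q) / m - 1)"
    using assms \<open>m > 0\<close> by (intro add_mono mult_left_mono ln_le_minus_one) auto
  also have "\<dots> = (u + v) / m - (p + q)"
    using assms \<open>m > 0\<close> by (simp add: field_simps)
  also have "\<dots> = 0"
    using assms by (simp add: m_def)
  finally have "p * ln ((u / p) / m) + q * ln ((v / q) / m) \<le> 0" .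
  moreover have "p * ln ((u / p) / m) + q * ln ((v / q) / m)
      = p * ln (u / p) + q * ln (v / q) - (p + q) * ln m"
    using assms \<open>m > 0\<close> by (simp add: ln_div ln_mult algebra_simps)
  ultimately show ?thesis by (simp add: m_def)
qed

lemma sum_gam_eq:
  assumes "\<And>i. i < N \<Longrightarrow> (\<Sum>k<K. rho k i) = 1"
  shows "(\<Sum>k<K. gam rho N k) = real N"
  unfolding gam_def using assms by (subst sum.swap) simp

lemma sum_gam_lt_dim:
  assumes "CARD('d) \<ge> 2" "N \<ge> 1"
    and "\<And>i. i < N \<Longrightarrow> (\<Sum>k<K. rho k i) = 1"
    and "\<And>k. k < K \<Longrightarrow> gam rho N k \<ge> 0"
    and "S \<subseteq> {..<K}"
  shows "(\<Sum>k\<in>S. gam rho N k) < real CARD('d) * real N"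
proof -
  have "(\<Sum>k\<in>S. gam rho N k) \<le> (\<Sum>k<K. gam rho N k)"
    using assms(4,5) by (intro sum_mono2) auto
  also have "\<dots> = real N"
    using assms(3) by (rule sum_gam_eq)
  also have "\<dots> < 2 * real N"
    using assms(2) by simp
  also have "\<dots> \<le> real CARD('d) * real N"
    using assms(1) by (intro mult_right_mono) auto
  finally show ?thesis .
qed

lemma gfun_remove:
  fixes y :: "nat \<Rightarrow> real^'d" and rho :: "nat \<Rightarrow> nat \<Rightarrow> real" and N :: nat
  assumes "finite S" "j \<in> S"
  defines "D \<equiv> real CARD('d) * real N - (\<Sum>k\<in>S. gam rho N k)"
    and "E \<equiv> frob_sq y N - (\<Sum>k\<in>S. lam y rho N k)"
    and "R \<equiv> (\<Sum>k\<in>S - {j}. gam rho N k * ln (lam y rho N k / gam rho N k))"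
  shows "gfun y rho N S = D * ln (E / D) + gam rho N j * ln (lam y rho N j / gam rho N j) + R"
    and "gfun y rho N (S - {j})
           = (D + gam rho N j) * ln ((E + lam y rho N j) / (D + gam rho N j)) + R"
  using sum.remove[OF assms(1,2), of "gam rho N"] sum.remove[OF assms(1,2), of "lam y rho N"]
    sum.remove[OF assms(1,2), of "\<lambda>k. gam rho N k * ln (lam y rho N k / gam rho N k)"]
  by (simp_all add: gfun_def sigma2_def D_def E_def R_def)

theorem lemma3:
  fixes y :: "nat \<Rightarrow> real^'d" and rho :: "nat \<Rightarrow> nat \<Rightarrow> real"
    and N K j :: nat and S :: "nat set"
  assumes d2: "CARD('d) \<ge> 2" and N1: "N \<ge> 1" and K1: "K \<ge> 1"
    and rho_nonneg: "\<And>k i. k < K \<Longrightarrow> i < N \<Longrightarrow> rho k i \<ge> 0"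
    and rho_sum: "\<And>i. i < N \<Longrightarrow> (\<Sum>k<K. rho k i) = 1"
    and gam_pos: "\<And>k. k < K \<Longrightarrow> gam rho N k > 0"
    and lam_pos: "\<And>k. k < K \<Longrightarrow> lam y rho N k > 0"
    and sigma_pos: "\<And>T. T \<subseteq> {..<K} \<Longrightarrow> sigma2 y rho N T > 0"
    and S: "S \<subseteq> {..<K}" and j: "j \<in> S"
    and le: "sigma2 y rho N S \<le> lam y rho N j / gam rho N j"
  shows "gfun y rho N S \<le> gfun y rho N (S - {j})"
proof -
  define D where "D = real CARD('d) * real N - (\<Sum>k\<in>S. gam rho N k)"
  define E where "E = frob_sq y N - (\<Sum>k\<in>S. lam y rho N k)"
  have "finite S" using S finite_subset by blast
  have "j < K" using S j by auto
  have "D > 0"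
    using sum_gam_lt_dim[OF d2 N1 rho_sum _ S] gam_pos by (force simp: D_def)
  moreover have "E / D > 0"
    using sigma_pos[OF S] by (simp add: sigma2_def D_def E_def)
  ultimately have "E > 0" by (simp add: zero_less_divide_iff)
  have "D * ln (E / D) + gam rho N j * ln (lam y rho N j / gam rho N j)
      \<le> (D + gam rho N j) * ln ((E + lam y rho N j) / (D + gam rho N j))"
    using \<open>D > 0\<close> \<open>E > 0\<close> gam_pos lam_pos \<open>j < K\<close> by (intro log_sum_inequality) auto
  then show ?thesis
    using gfun_remove[OF \<open>finite S\<close> j, of y rho N] by (simp add: D_def E_def)
qed

end
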